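(* Let $N\ge2$ and let $q$ be a primitive $4N$-th root of unity with $q^N=\mathbf{i}$. Then (a) $x_N=x_{N-1}=-1$; and (b) for a standard shifted tableau $\Lambda$ and an index $k$ with $q_k\neq q_{k+1}^{\pm1}$ (so that $\beta_k$ is defined), one has $\beta_k=0$ whenever $m_k+m_{k+1}+2=2N$.
   Context: $\mathbf{i}=\sqrt{-1}$, $[m]_{q^2}=(q^{2m}-q^{-2m})/(q^2-q^{-2})$. For each integer $m\ge0$ fix a square root $s_m$ of $[m+1]_{q^2}[m]_{q^2}$ and set $x_m=[m+1]_{q^2}-[m]_{q^2}-(q-q^{-1})s_m$. For a strict partition $\lambda$, its shifted diagram consists of boxes $(i,j)$ with $i\le j\le i+\lambda_i-1$; a standard shifted tableau $\Lambda$ fills it with $1,\dots,n$ increasing along rows and columns. For $1\le k\le n$, $(i_k,j_k)$ is the box containing $k$, $m_k=j_k-i_k$, $q_k=x_{m_k}$, and when $q_k\neq q_{k+1}^{\pm1}$, $\beta_k=1-(q-q^{-1})^2\left(\frac{q_{k+1}^{-1}q_k}{(q_{k+1}^{-1}q_k-1)^2}+\frac{q_{k+1}q_k}{(q_{k+1}q_k-1)^2}\right)$. *)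

theory Defs
  imports Complex_Main
begin

definition qint :: "complex \<Rightarrow> nat \<Rightarrow> complex" where
  "qint q m = (q ^ (2*m) - inverse q ^ (2*m)) / (q\<^sup>2 - inverse q ^ 2)"

text \<open>x_m = [m+1] - [m] - (q - q^{-1}) s_m, where s is a chosen family of square roots.\<close>
definition xm :: "complex \<Rightarrow> (nat \<Rightarrow> complex) \<Rightarrow> nat \<Rightarrow> complex" where
  "xm q s m = qint q (m+1) - qint q m - (q - inverse q) * s m"

definition primitive_root :: "nat \<Rightarrow> complex \<Rightarrow> bool" where
  "primitive_root n z \<longleftrightarrow> z ^ n = 1 \<and> (\<forall>d. 0 < d \<and> d < n \<longrightarrow> z ^ d \<noteq> 1)"

definition strict_partition :: "nat list \<Rightarrow> bool" where
  "strict_partition lam \<longleftrightarrow> (\<forall>p \<in> set lam. 0 < p) \<and> sorted_wrt (>) lam"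

text \<open>Shifted diagram, rows indexed from 1: boxes (i,j) with i \<le> j \<le> i + lam_i - 1.\<close>
definition shifted_diagram :: "nat list \<Rightarrow> (nat \<times> nat) set" where
  "shifted_diagram lam = {(i,j). 1 \<le> i \<and> i \<le> length lam \<and> i \<le> j \<and> j + 1 \<le> i + lam ! (i - 1)}"

definition standard_shifted_tableau :: "nat list \<Rightarrow> (nat \<times> nat \<Rightarrow> nat) \<Rightarrow> bool" where
  "standard_shifted_tableau lam T \<longleftrightarrow>
     bij_betw T (shifted_diagram lam) {1..sum_list lam} \<and>
     (\<forall>i j. (i,j) \<in> shifted_diagram lam \<and> (i, j+1) \<in> shifted_diagram lam \<longrightarrow> T (i,j) < T (i,j+1)) \<and>
     (\<forall>i j. (i,j) \<in> shifted_diagram lam \<and> (i+1, j) \<in> shifted_diagram lam \<longrightarrow> T (i,j) < T (i+1,j))"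

definition tab_m :: "nat list \<Rightarrow> (nat \<times> nat \<Rightarrow> nat) \<Rightarrow> nat \<Rightarrow> nat" where
  "tab_m lam T k = (let (i,j) = inv_into (shifted_diagram lam) T k in j - i)"

definition beta :: "complex \<Rightarrow> complex \<Rightarrow> complex \<Rightarrow> complex" where
  "beta q qk qk1 = 1 - (q - inverse q)\<^sup>2 *
     (inverse qk1 * qk / (inverse qk1 * qk - 1)\<^sup>2 + qk1 * qk / (qk1 * qk - 1)\<^sup>2)"

end

theory Submission
  imports Defs
begin

(* For q \<noteq> 0 with q^4 \<noteq> 1 one has ([m+1] - [m])^2 - (q - q^-1)^2 [m+1][m] = 1, so the relation
   s_m^2 = [m+1][m] makes [m+1] - [m] + (q - q^-1) s_m the inverse of x_m. Hence
   x_m + x_m^-1 = 2([m+1] - [m]) = 2 (q^(2m+1) + q^-(2m+1)) / (q + q^-1) for either choice of root.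
   With X = a + a^-1 and Y = b + b^-1 one has beta q a b = 1 - (q - q^-1)^2 (X Y - 4) / (X - Y)^2.
   If m + n + 2 = 2N and q^(4N) = 1 then q^(2n+1) = q^-(2m+3), so both traces are Laurent
   polynomials in u = q^(2m+2), and for these (X - Y)^2 = (q - q^-1)^2 (X Y - 4) holds identically.
   Part (a) is the evaluation [N] = 0, [N+1] = -1, [N-1] = 1 forced by q^(2N) = -1. *)

lemma beta_eq_0_iff:
  fixes q a b :: complex
  assumes "a \<noteq> 0" and "b \<noteq> 0" and "a \<noteq> b" and "a * b \<noteq> 1"
  defines "X \<equiv> a + inverse a" and "Y \<equiv> b + inverse b"
  shows "beta q a b = 0 \<longleftrightarrow> (X - Y)\<^sup>2 = (q - inverse q)\<^sup>2 * (X * Y - 4)"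
proof -
  have "a - b \<noteq> 0" "a * b - 1 \<noteq> 0"
    using assms(3,4) by simp_all
  have diff: "X - Y = (a - b) * (a * b - 1) / (a * b)"
    using assms(1,2) by (simp add: X_def Y_def field_simps)
  have prod: "X * Y - 4 = ((a - b)\<^sup>2 + (a * b - 1)\<^sup>2) / (a * b)"
    using assms(1,2) by (simp add: X_def Y_def field_simps power2_eq_square)
  have "p / u\<^sup>2 + p / w\<^sup>2 = ((u\<^sup>2 + w\<^sup>2) / p) / (u * w / p)\<^sup>2"
    if "u \<noteq> 0" "w \<noteq> 0" "p \<noteq> 0" for u w p :: complex
    using that by (simp add: field_simps power2_eq_square)
  moreover have "inverse b * a / (inverse b * a - 1)\<^sup>2 = a * b / (a - b)\<^sup>2"
    using assms(2) \<open>a - b \<noteq> 0\<close> by (simp add: field_simps power2_eq_square)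
  ultimately have "inverse b * a / (inverse b * a - 1)\<^sup>2 + b * a / (b * a - 1)\<^sup>2
      = (X * Y - 4) / (X - Y)\<^sup>2"
    unfolding diff prod using assms(1,2) \<open>a - b \<noteq> 0\<close> \<open>a * b - 1 \<noteq> 0\<close>
    by (simp add: mult.commute[of b a])
  then have "beta q a b = 1 - (q - inverse q)\<^sup>2 * (X * Y - 4) / (X - Y)\<^sup>2"
    by (simp add: beta_def)
  moreover have "X - Y \<noteq> 0"
    unfolding diff using assms(1,2) \<open>a - b \<noteq> 0\<close> \<open>a * b - 1 \<noteq> 0\<close> by simp
  ultimately show ?thesis
    by (auto simp add: divide_eq_eq)
qed

lemma qint_half_period:
  fixes q :: complex
  assumes "q ^ (2*N) = -1"
  shows "qint q N = 0"
  using assms by (simp add: qint_def power_inverse)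

context
  fixes q :: complex
  assumes q_nonzero: "q \<noteq> 0" and q_power4: "q ^ 4 \<noteq> 1"
begin

lemma square_sub_inverse_square_nonzero: "q\<^sup>2 - inverse q ^ 2 \<noteq> 0"
proof
  assume "q\<^sup>2 - inverse q ^ 2 = 0"
  moreover have "q * inverse q = 1"
    using q_nonzero by simp
  ultimately have "q ^ 4 = 1"
    by algebra
  with q_power4 show False ..
qed

lemma add_inverse_nonzero: "q + inverse q \<noteq> 0"
  using square_sub_inverse_square_nonzero
  by (metis mult_zero_left power2_eq_square square_diff_square_factored)

lemma qint_Suc_diff:
  "qint q (m+1) - qint q m = (q ^ (2*m+1) + inverse q ^ (2*m+1)) / (q + inverse q)"
proof -
  have "(q ^ (2*(m+1)) - inverse q ^ (2*(m+1)) - (q ^ (2*m) - inverse q ^ (2*m))) * (q + inverse q)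
        = (q ^ (2*m+1) + inverse q ^ (2*m+1)) * (q\<^sup>2 - inverse q ^ 2)"
    using q_nonzero by (simp add: field_simps power2_eq_square)
  then show ?thesis
    using square_sub_inverse_square_nonzero add_inverse_nonzero
    unfolding qint_def diff_divide_distrib[symmetric] by (simp add: frac_eq_eq)
qed

lemma qint_Suc_diff_sq:
  "(qint q (m+1) - qint q m)\<^sup>2 - (q - inverse q)\<^sup>2 * (qint q (m+1) * qint q m) = 1"
proof -
  define r where "r = inverse q"
  define Q where "Q = q ^ (2*m)"
  define R where "R = r ^ (2*m)"
  define A where "A = Q * q\<^sup>2 - R * r\<^sup>2"
  define B where "B = Q - R"
  define D where "D = q\<^sup>2 - r\<^sup>2"
  have "q * r = 1" "Q * R = 1"
    using q_nonzero by (simp_all add: r_def Q_def R_def flip: power_mult_distrib)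
  then have numerator: "(A - B)\<^sup>2 - (q - r)\<^sup>2 * (A * B) = D\<^sup>2"
    unfolding A_def B_def D_def by algebra
  have "q ^ (2*(m+1)) = Q * q\<^sup>2" "r ^ (2*(m+1)) = R * r\<^sup>2"
    unfolding Q_def R_def by (simp_all flip: power_add)
  then have qints: "qint q (m+1) = A / D" "qint q m = B / D"
    unfolding qint_def r_def[symmetric] A_def B_def D_def Q_def[symmetric] R_def[symmetric]
    by simp_all
  have "D \<noteq> 0"
    using square_sub_inverse_square_nonzero by (simp add: D_def r_def)
  then have "(A / D - B / D)\<^sup>2 - (q - r)\<^sup>2 * (A / D * (B / D))
      = ((A - B)\<^sup>2 - (q - r)\<^sup>2 * (A * B)) / D\<^sup>2"
    by (simp add: field_simps power2_eq_square)
  with \<open>D \<noteq> 0\<close> show ?thesis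
    unfolding r_def[symmetric] qints numerator by simp
qed

lemma qint_Suc_diff_reflection:
  assumes "q ^ (2 * (m + n + 2)) = 1"
  defines "X \<equiv> 2 * (qint q (m+1) - qint q m)" and "Y \<equiv> 2 * (qint q (n+1) - qint q n)"
  shows "(X - Y)\<^sup>2 = (q - inverse q)\<^sup>2 * (X * Y - 4)"
proof -
  define r where "r = inverse q"
  define u where "u = q ^ (2*m+2)"
  define v where "v = r ^ (2*m+2)"
  define D where "D = q + r"
  have qr: "q * r = 1"
    using q_nonzero by (simp add: r_def)
  then have uv: "u * v = 1"
    unfolding u_def v_def power_mult_distrib[symmetric] by simp
  have m_powers: "q ^ (2*m+1) = u * r" "r ^ (2*m+1) = v * q"
    using qr by (simp_all add: u_def v_def mult.assoc mult.commute[of q r])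
  have cancel: "x = y * z" if "x * (w * z') = 1" "w * y = 1" "z' * z = 1"
    for x y z w z' :: complex
    using that by algebra
  have q_n: "q ^ (2*n+1) * (u * q) = 1"
    using assms(1) by (simp add: u_def algebra_simps flip: power_add power_Suc)
  then have r_n: "r ^ (2*n+1) * (v * r) = 1"
    unfolding r_def v_def u_def power_inverse by (metis inverse_1 inverse_mult_distrib)
  have n_powers: "q ^ (2*n+1) = v * r" "r ^ (2*n+1) = u * q"
    using cancel[OF q_n uv qr] cancel[OF r_n, of u q] uv qr by (simp_all add: mult.commute)
  have "D \<noteq> 0"
    using add_inverse_nonzero by (simp add: D_def r_def)
  have "X = 2 * (u * r + v * q) / D" "Y = 2 * (v * r + u * q) / D"
    unfolding X_def Y_def qint_Suc_diff r_def[symmetric] D_def[symmetric] m_powers n_powers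
    by simp_all
  moreover have "(2 * (u * r + v * q) - 2 * (v * r + u * q))\<^sup>2
      = (q - r)\<^sup>2 * (2 * (u * r + v * q) * (2 * (v * r + u * q)) - 4 * D\<^sup>2)"
    unfolding D_def using qr uv by algebra
  moreover have "(P / D - S / D)\<^sup>2 = c * (P / D * (S / D) - 4)"
    if "(P - S)\<^sup>2 = c * (P * S - 4 * D\<^sup>2)" for P S c
    using that \<open>D \<noteq> 0\<close> by (simp add: field_simps power2_eq_square)
  ultimately show ?thesis
    unfolding r_def[symmetric] by simp
qed

lemma qint_Suc_half_period:
  assumes "q ^ (2*N) = -1"
  shows "qint q (N+1) = -1"
proof -
  have "q ^ (2*(N+1)) = - q\<^sup>2" "inverse q ^ (2*(N+1)) = - (inverse q ^ 2)"
    using assms by (simp_all add: power_add power2_eq_square power_inverse)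
  then show ?thesis
    using square_sub_inverse_square_nonzero by (simp add: qint_def field_simps)
qed

lemma qint_pred_half_period:
  assumes "q ^ (2*N) = -1" and "N \<ge> 1"
  shows "qint q (N-1) = 1"
proof -
  define r where "r = inverse q"
  obtain k where N: "N = k + 1"
    using assms(2) by (metis add.commute le_add_diff_inverse)
  have qr: "q * r = 1" "r * q = 1"
    using q_nonzero by (simp_all add: r_def)
  have "q ^ (2*N) = -1" "r ^ (2*N) = -1"
    using assms(1) by (simp_all add: r_def power_inverse)
  then have "q ^ (2*k) * q\<^sup>2 = -1" "r ^ (2*k) * r\<^sup>2 = -1"
    by (simp_all add: N flip: power_add)
  moreover have "x = - z\<^sup>2" if "x * y\<^sup>2 = -1" "y * z = 1" for x y z :: complex
    using that by algebra
  ultimately have "q ^ (2*k) = - r\<^sup>2" "r ^ (2*k) = - q\<^sup>2"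
    using qr by blast+
  moreover have "q\<^sup>2 - r\<^sup>2 \<noteq> 0"
    using square_sub_inverse_square_nonzero by (simp add: r_def)
  ultimately show ?thesis
    by (simp add: N qint_def r_def[symmetric])
qed

context
  fixes s :: "nat \<Rightarrow> complex" and m :: nat
  assumes s_square: "(s m)\<^sup>2 = qint q (m+1) * qint q m"
begin

lemma xm_mult_conjugate: "xm q s m * (qint q (m+1) - qint q m + (q - inverse q) * s m) = 1"
  using qint_Suc_diff_sq[of m] s_square by (simp add: xm_def algebra_simps power2_eq_square)

lemma xm_nonzero: "xm q s m \<noteq> 0"
  using xm_mult_conjugate by auto

lemma xm_add_inverse: "xm q s m + inverse (xm q s m) = 2 * (qint q (m+1) - qint q m)"
  using inverse_unique[OF xm_mult_conjugate] by (simp add: xm_def)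

end

lemma xm_half_period:
  assumes "q ^ (2*N) = -1" and "(s N)\<^sup>2 = qint q (N+1) * qint q N"
  shows "xm q s N = -1"
  using assms qint_half_period[OF assms(1)] qint_Suc_half_period[OF assms(1)]
  by (simp add: xm_def)

lemma xm_pred_half_period:
  assumes "q ^ (2*N) = -1" and "N \<ge> 1" and "(s (N-1))\<^sup>2 = qint q N * qint q (N-1)"
  shows "xm q s (N-1) = -1"
  using assms qint_half_period[OF assms(1)] qint_pred_half_period[OF assms(1,2)]
  by (simp add: xm_def)

end

theorem lemma2p31:
  fixes N :: nat and q :: complex and s :: "nat \<Rightarrow> complex"
  assumes "N \<ge> 2"
    and "primitive_root (4*N) q"
    and "q ^ N = \<i>"
    and "\<And>m. (s m)\<^sup>2 = qint q (m+1) * qint q m"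
  shows "(xm q s N = -1 \<and> xm q s (N - 1) = -1) \<and>
         (\<forall>lam T k. strict_partition lam \<longrightarrow> standard_shifted_tableau lam T \<longrightarrow>
           1 \<le> k \<longrightarrow> k < sum_list lam \<longrightarrow>
           xm q s (tab_m lam T k) \<noteq> xm q s (tab_m lam T (k+1)) \<longrightarrow>
           xm q s (tab_m lam T k) \<noteq> inverse (xm q s (tab_m lam T (k+1))) \<longrightarrow>
           tab_m lam T k + tab_m lam T (k+1) + 2 = 2*N \<longrightarrow>
           beta q (xm q s (tab_m lam T k)) (xm q s (tab_m lam T (k+1))) = 0)"
proof -
  have q_4N: "q ^ (4*N) = 1" and q_4: "q ^ 4 \<noteq> 1"
    using assms(1,2) unfolding primitive_root_def by auto
  have q_0: "q \<noteq> 0"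
    using q_4N assms(1) by (auto simp: power_0_left)
  have q_2N: "q ^ (2*N) = -1"
    using assms(3) by (simp add: power_mult mult.commute[of 2])
  have "xm q s N = -1 \<and> xm q s (N - 1) = -1"
    using xm_half_period[of q N s, OF q_0 q_4 q_2N assms(4)] assms(1)
      xm_pred_half_period[of q N s, OF q_0 q_4 q_2N] assms(4)[of "N - 1"] by simp
  moreover have "beta q (xm q s m) (xm q s n) = 0"
    if "xm q s m \<noteq> xm q s n" and "xm q s m \<noteq> inverse (xm q s n)" and "m + n + 2 = 2*N" for m n
  proof (rule beta_eq_0_iff[THEN iffD2])
    show "xm q s m \<noteq> xm q s n"
      by (fact that(1))
    show "xm q s m \<noteq> 0" "xm q s n \<noteq> 0"
      using xm_nonzero[of q s m, OF q_0 q_4 assms(4)] xm_nonzero[of q s n, OF q_0 q_4 assms(4)]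
      by simp_all
    then show "xm q s m * xm q s n \<noteq> 1"
      using that(2) by (metis inverse_unique mult.commute)
    have "q ^ (2 * (m + n + 2)) = 1"
      using q_4N that(3) by (simp add: mult.assoc)
    then show "(xm q s m + inverse (xm q s m) - (xm q s n + inverse (xm q s n)))\<^sup>2
        = (q - inverse q)\<^sup>2 * ((xm q s m + inverse (xm q s m)) * (xm q s n + inverse (xm q s n)) - 4)"
      unfolding xm_add_inverse[of q s m, OF q_0 q_4 assms(4)] xm_add_inverse[of q s n, OF q_0 q_4 assms(4)]
      by (rule qint_Suc_diff_reflection[OF q_0 q_4])
  qed
  ultimately show ?thesis
    by blast
qed

end
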